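(* In the setting below, let $\varepsilon_0$ and $\lambda_p=\lambda_p(\nu_0,\varepsilon)$ be as in the following fact: there exist $C_0>0$, $\nu_0>1$, $0<\varepsilon_0\le\delta_0$ such that for every $p$ and $0<\varepsilon\le\varepsilon_0$ there is $\lambda_p$ with, for all $\lambda\ge\lambda_p$ and $\sigma=\sum\alpha_i\delta_{a_i}\in B_p(\partial M)$, $\mathcal{E}_g(f_p(\lambda)(\sigma))\le p^{2/n}\mathcal{Y}(S^n_+)$ if some $\alpha_{i_0}/\alpha_{j_0}>\nu_0$ or $\sum_{i\ne j}\varepsilon_{i,j}>\varepsilon$, and $\mathcal{E}_g(f_p(\lambda)(\sigma))\le p^{2/n}\mathcal{Y}(S^n_+)(1+C_0\lambda^{2-n}-c_g(p-1)\lambda^{2-n})$ otherwise. Then there exists $p_0\in\mathbb{N}^*$ such that for every $0<\varepsilon\le\varepsilon_0$ and every $\lambda\ge\lambda_{p_0}$, $f_{p_0}(\lambda)(B_{p_0}(\partial M))\subset W_{p_0-1}$.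
   Context: Setting as follows. $(\overline M,g)$ compact, dimension $n\ge6$, $\partial M$ totally geodesic, $\mathcal{Y}(M,\partial M,g)>0$; $\mathcal{E}_g$ the boundary Yamabe functional $\frac{\langle L_gu,u\rangle_{L^2(M)}+\langle B_gu,u\rangle_{L^2(\partial M)}}{(\int_Mu^{2n/(n-2)}dV_g)^{(n-2)/n}}$ on $W^{1,2}_+(\overline M)=\{u\in W^{1,2}(\overline M):u>0\}$, with $L_g=-4\frac{n-1}{n-2}\Delta_g+R_g$, $B_g=\frac{4(n-1)}{n-2}\partial_{n_g}+2(n-1)H_g$; $\mathcal{Y}(S^n_+)$ the Yamabe invariant of the round hemisphere. For $p\in\mathbb{N}$, $W_p=\{u\in W^{1,2}_+(\overline M):\mathcal{E}_g(u)\le(p+1)^{2/n}\mathcal{Y}(S^n_+)\}$. $G$ is the normalized Green's function of $(L_g,B_g)$; $c_1=\int_{\mathbb{R}^n_+}(1+|x|^2)^{-n}dx$, $c_3=\int_{\mathbb{R}^n_+}(1+|x|^2)^{-\frac{n+2}2}dx$, $c_g=\frac{c_3}{4c_1}\min_{x\ne y\in\partial M}G(x,y)>0$, $\varepsilon_{i,j}=c_3(2+\lambda^2G(a_i,a_j)^{\frac2{2-n}})^{-\frac{n-2}2}$. $B_p(\partial M)$ is the set of formal barycenters $\sum_{i=1}^p\alpha_i\delta_{a_i}$ ($a_i\in\partial M$, $\alpha_i\ge0$, $\sum\alpha_i=1$), and $f_p(\lambda)(\sum\alpha_i\delta_{a_i})=\sum\alpha_i\varphi_{a_i,\lambda}$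 where $\varphi_{a,\lambda}=u_av_{a,1/\lambda,\lambda^{-2/n}}$ is the conformally rescaled Brendle–Chen bubble centered at $a\in\partial M$ (defined for $\lambda\ge2\delta_0^{-n/2}$, $\delta_0>0$ a fixed small constant). *)

theory Defs
  imports "HOL-Analysis.Analysis"
begin

text \<open>Formal barycenters sum_{i=1..p} alpha_i delta_{a_i}, represented by pairs (alpha, a)
  with alpha_i \<ge> 0, sum alpha_i = 1, a_i in the boundary S.\<close>
definition bary :: "nat \<Rightarrow> 'pt set \<Rightarrow> ((nat \<Rightarrow> real) \<times> (nat \<Rightarrow> 'pt)) set" where
  "bary p S = {(\<alpha>, a). (\<forall>i\<in>{1..p}. \<alpha> i \<ge> 0 \<and> a i \<in> S) \<and> (\<Sum>i=1..p. \<alpha> i) = 1}"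

definition fp :: "('pt \<Rightarrow> real \<Rightarrow> 'm \<Rightarrow> real) \<Rightarrow> nat \<Rightarrow> real
     \<Rightarrow> (nat \<Rightarrow> real) \<times> (nat \<Rightarrow> 'pt) \<Rightarrow> ('m \<Rightarrow> real)" where
  "fp phi p lam \<sigma> = (\<lambda>x. \<Sum>i=1..p. fst \<sigma> i * phi (snd \<sigma> i) lam x)"

definition Wset :: "('m \<Rightarrow> real) set \<Rightarrow> (('m \<Rightarrow> real) \<Rightarrow> real) \<Rightarrow> real \<Rightarrow> nat \<Rightarrow> nat
     \<Rightarrow> ('m \<Rightarrow> real) set" where
  "Wset W12 E Y n p = {u \<in> W12. E u \<le> (real p + 1) powr (2 / real n) * Y}"

definition epsij :: "real \<Rightarrow> ('pt \<Rightarrow> 'pt \<Rightarrow> real) \<Rightarrow> nat \<Rightarrow> real \<Rightarrow> (nat \<Rightarrow> 'pt)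
     \<Rightarrow> nat \<Rightarrow> nat \<Rightarrow> real" where
  "epsij c3 G n lam a i j =
     c3 * (2 + lam\<^sup>2 * G (a i) (a j) powr (2 / (2 - real n))) powr (- (real n - 2) / 2)"

end

theory Submission
  imports Defs
begin

text \<open>The interaction term \<open>-c_g (p - 1) \<lambda>^(2-n)\<close> grows linearly in the number \<open>p\<close>
  of bubbles, whereas the error term \<open>C_0 \<lambda>^(2-n)\<close> does not depend on \<open>p\<close>. Once
  \<open>c_g (p_0 - 1) > C_0\<close>, the correction factor in the second alternative is at most \<open>1\<close>, so in
  both alternatives the energy is at most \<open>p_0^(2/n) Y(S^n_+)\<close>, the threshold defining
  \<open>W_(p_0-1)\<close>.\<close>

lemma ex_nat_interaction_dominates:
  fixes c C :: real
  assumes "c > 0"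
  shows "\<exists>p \<ge> 1. C < c * (real p - 1)"
proof -
  obtain k :: nat where "C / c < real k"
    using reals_Archimedean2 by blast
  then have "C < c * (real (k + 1) - 1)"
    using assms by (simp add: field_simps)
  then show ?thesis
    by (intro exI[of _ "k + 1"]) simp
qed

lemma le_of_le_mult_correction_factor:
  fixes x A C c p t :: real
  assumes bound: "x \<le> A * (1 + C * t - c * (p - 1) * t)"
    and "A \<ge> 0" and "t > 0" and "C < c * (p - 1)"
  shows "x \<le> A"
proof -
  have "C * t < c * (p - 1) * t"
    using assms(3,4) by simp
  then have "A * (1 + C * t - c * (p - 1) * t) \<le> A * 1"
    using assms(2) by (intro mult_left_mono) auto
  then show ?thesis
    using bound by simp
qed

lemma mem_Wset_pred_iff:
  assumes "p \<ge> 1"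
  shows "u \<in> Wset W12 E Y n (p - 1) \<longleftrightarrow> u \<in> W12 \<and> E u \<le> real p powr (2 / real n) * Y"
  using assms by (simp add: Wset_def of_nat_diff)

theorem corollary3p3:
  fixes E :: "('m \<Rightarrow> real) \<Rightarrow> real"
    and W12 :: "('m \<Rightarrow> real) set"
    and dM :: "'pt set"
    and phi :: "'pt \<Rightarrow> real \<Rightarrow> 'm \<Rightarrow> real"
    and G :: "'pt \<Rightarrow> 'pt \<Rightarrow> real"
    and Y c1 c3 cg \<delta>0 C0 \<nu>0 \<epsilon>0 :: real
    and n :: nat
    and lamp :: "nat \<Rightarrow> real \<Rightarrow> real"
  assumes n6: "n \<ge> 6"
    and Ypos: "Y > 0"
    and c1pos: "c1 > 0" and c3pos: "c3 > 0"
    and cg_def: "cg = c3 / (4 * c1) * Inf {G x y | x y. x \<in> dM \<and> y \<in> dM \<and> x \<noteq> y}"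
    and cgpos: "cg > 0"
    and \<delta>0pos: "\<delta>0 > 0"
    and f_in_W12: "\<And>p lam \<sigma>. p \<ge> 1 \<Longrightarrow> lam \<ge> 2 * \<delta>0 powr (- real n / 2) \<Longrightarrow>
                     \<sigma> \<in> bary p dM \<Longrightarrow> fp phi p lam \<sigma> \<in> W12"
    and C0pos: "C0 > 0" and \<nu>0gt: "\<nu>0 > 1"
    and \<epsilon>0pos: "0 < \<epsilon>0" and \<epsilon>0le: "\<epsilon>0 \<le> \<delta>0"
    and fact: "\<And>p \<epsilon>. p \<ge> 1 \<Longrightarrow> 0 < \<epsilon> \<Longrightarrow> \<epsilon> \<le> \<epsilon>0 \<Longrightarrow>
        lamp p \<epsilon> \<ge> 2 * \<delta>0 powr (- real n / 2) \<and>
        (\<forall>lam \<ge> lamp p \<epsilon>. \<forall>\<alpha> a. (\<alpha>, a) \<in> bary p dM \<longrightarrow>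
           (((\<exists>i\<in>{1..p}. \<exists>j\<in>{1..p}. \<alpha> i > \<nu>0 * \<alpha> j)
              \<or> (\<Sum>i=1..p. \<Sum>j\<in>{1..p} - {i}. epsij c3 G n lam a i j) > \<epsilon>)
             \<longrightarrow> E (fp phi p lam (\<alpha>, a)) \<le> real p powr (2 / real n) * Y)
         \<and> (\<not> ((\<exists>i\<in>{1..p}. \<exists>j\<in>{1..p}. \<alpha> i > \<nu>0 * \<alpha> j)
              \<or> (\<Sum>i=1..p. \<Sum>j\<in>{1..p} - {i}. epsij c3 G n lam a i j) > \<epsilon>)
             \<longrightarrow> E (fp phi p lam (\<alpha>, a)) \<le> real p powr (2 / real n) * Y
                 * (1 + C0 * lam powr (2 - real n) - cg * (real p - 1) * lam powr (2 - real n))))"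
  shows "\<exists>p0 \<ge> 1. \<forall>\<epsilon>. 0 < \<epsilon> \<and> \<epsilon> \<le> \<epsilon>0 \<longrightarrow>
           (\<forall>lam \<ge> lamp p0 \<epsilon>. fp phi p0 lam ` bary p0 dM \<subseteq> Wset W12 E Y n (p0 - 1))"
proof -
  obtain p0 where p0: "p0 \<ge> 1" and dominates: "C0 < cg * (real p0 - 1)"
    using ex_nat_interaction_dominates[OF cgpos] by blast
  have "fp phi p0 lam (\<alpha>, a) \<in> Wset W12 E Y n (p0 - 1)"
    if \<epsilon>: "0 < \<epsilon>" "\<epsilon> \<le> \<epsilon>0" and lam: "lam \<ge> lamp p0 \<epsilon>" and \<sigma>: "(\<alpha>, a) \<in> bary p0 dM"
    for \<epsilon> lam \<alpha> a
  proof -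
    note bounds = fact[OF p0 \<epsilon>]
    have lam_min: "lam \<ge> 2 * \<delta>0 powr (- real n / 2)"
      using bounds lam by linarith
    have "\<delta>0 powr (- real n / 2) > 0"
      using \<delta>0pos by simp
    then have "lam > 0"
      using lam_min by linarith
    then have "lam powr (2 - real n) > 0"
      by simp
    moreover have "real p0 powr (2 / real n) * Y \<ge> 0"
      using Ypos by simp
    moreover have "E (fp phi p0 lam (\<alpha>, a)) \<le> real p0 powr (2 / real n) * Y
        \<or> E (fp phi p0 lam (\<alpha>, a)) \<le> real p0 powr (2 / real n) * Y
             * (1 + C0 * lam powr (2 - real n) - cg * (real p0 - 1) * lam powr (2 - real n))"
      using bounds[THEN conjunct2, rule_format, OF lam \<sigma>] by blast
    ultimately have "E (fp phi p0 lam (\<alpha>, a)) \<le> real p0 powr (2 / real n) * Y"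
      using le_of_le_mult_correction_factor dominates by blast
    then show ?thesis
      using mem_Wset_pred_iff[OF p0] f_in_W12[OF p0 lam_min \<sigma>] by blast
  qed
  then show ?thesis
    using p0 by (intro exI[of _ p0]) (auto simp: image_subset_iff)
qed

end
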